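(* Let $K$ be a fan-like sphere with vertex set $[m]$, and let $\Sigma$ be a complete fan over $\operatorname{wed}_1(K)$, whose vertex set is $\{0,1,\dots,m\}$ (where $0$ and $1$ denote the two new vertices created from the vertex $1$ of $K$). Choose a nonzero point $x_i$ on each 1-cone of $\Sigma$ corresponding to $i\in\{0,\dots,m\}$, and let $\widehat X=(\widehat x_0,\widehat x_1,\dots,\widehat x_m)$ be a Shephard diagram for $\Sigma$ with respect to $X=(x_0,\dots,x_m)$. Then $(\widehat x_1,\widehat x_2,\dots,\widehat x_m)$ and $(\widehat x_0,\widehat x_2,\dots,\widehat x_m)$ are Shephard diagrams for the projected fans $\operatorname{proj}_0\Sigma$ and $\operatorname{proj}_1\Sigma$ respectively (with respect to the images of the corresponding points $x_j$ in the quotient spaces). Furthermore \[S(\Sigma,\widehat X)=S(\operatorname{proj}_0\Sigma,(\widehat x_1,\dots,\widehat x_m))\cap S(\operatorname{proj}_1\Sigma,(\widehat x_0,\widehat x_2,\dots,\widehat x_m)).\]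
   Context: Simplicial wedge: $\operatorname{wed}_v(K)=(I\star\operatorname{link}_K\{v\})\cup(\partial I\star(K\setminus\{v\}))$, $I$ a 1-simplex on two new vertices, $\partial I$ its 0-skeleton, $\star$ the join, $K\setminus\{v\}$ the induced subcomplex on the other vertices. A fan-like sphere is a simplicial $(n-1)$-sphere underlying a complete simplicial fan in $\mathbb{R}^n$. Fans are simplicial; a fan over a complex $L$ has its 1-cones indexed by the vertices of $L$ and cones spanned by faces; it is complete if its cones cover $\mathbb{R}^n$. For a cone $\sigma$ of $\Sigma$, the projected fan $\operatorname{proj}_\sigma\Sigma$ is the fan in $\mathbb{R}^n/\operatorname{span}\sigma$ formed by the images of the cones of $\Sigma$ containing $\sigma$ (here $\operatorname{proj}_i$ means projection with respect to the 1-cone of vertex $i$). Linear transform: for a sequence $X=(x_1,\dots,x_m)$ spanning $\mathbb{R}^n$, write a basis of $\{\alpha\in\mathbb{R}^m:\sum\alpha_ix_i=0\}$ as the rows of an $(m-n)\times m$ matrix; its columns $\overline X=(\overline x_1,\dots,\overline x_m)$ form a linear transform of $X$. If $X$ positively spans $\mathbb{R}^n$, then $\operatorname{pos}\overline X$ is a strongly convex cone; choose a hyperplane $H$ not through $0$ meeting each ray $\{a\overline x_i:a>0\}$, at a point $\widehat x_i$; $\widehat X=(\widehat x_1,\dots,\widehat x_m)$ is a Shephard diagram of $X$. For a complete fan $\Sigma$ and points $x_i$ on its 1-cones, this is a Shephard diagram for $\Sigma$. A subsequence $Y$ of $X$ is a coface of $\Sigma$ if $\operatorname{pos}(X\setminus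 Y)$ is a cone of $\Sigma$; $\widehat X|_Y$ denotes the corresponding subsequence of $\widehat X$, and $S(\Sigma,\widehat X)=\bigcap_{Y\text{ coface of }\Sigma}\operatorname{relint}\operatorname{conv}\widehat X|_Y$. *)

theory Defs
  imports "HOL-Analysis.Analysis"
begin

definition simplicial_complex :: "'v set set \<Rightarrow> 'v set \<Rightarrow> bool" where
  "simplicial_complex K V \<longleftrightarrow>
     (\<forall>\<sigma>\<in>K. finite \<sigma> \<and> \<sigma> \<subseteq> V) \<and>
     (\<forall>\<sigma>\<in>K. \<forall>\<tau>. \<tau> \<subseteq> \<sigma> \<longrightarrow> \<tau> \<in> K) \<and>
     (\<forall>v\<in>V. {v} \<in> K)"

definition sc_join :: "'v set set \<Rightarrow> 'v set set \<Rightarrow> 'v set set" where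
  "sc_join A B = {\<sigma> \<union> \<tau> | \<sigma> \<tau>. \<sigma> \<in> A \<and> \<tau> \<in> B}"

definition sc_link :: "'v set set \<Rightarrow> 'v \<Rightarrow> 'v set set" where
  "sc_link K v = {\<tau> \<in> K. v \<notin> \<tau> \<and> insert v \<tau> \<in> K}"

definition sc_delete :: "'v set set \<Rightarrow> 'v \<Rightarrow> 'v set set" where
  "sc_delete K v = {\<tau> \<in> K. v \<notin> \<tau>}"

definition edge_simplex :: "'v \<Rightarrow> 'v \<Rightarrow> 'v set set" where
  "edge_simplex a b = Pow {a, b}"

definition edge_boundary :: "'v \<Rightarrow> 'v \<Rightarrow> 'v set set" where
  "edge_boundary a b = {A \<in> Pow {a, b}. card A \<le> 1}"

text \<open>wed_v(K) = (I * link_K{v}) \<union> (\<partial>I * (K \ {v})), I the 1-simplex on new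
  vertices a, b.\<close>
definition wedge :: "'v set set \<Rightarrow> 'v \<Rightarrow> 'v \<Rightarrow> 'v \<Rightarrow> 'v set set" where
  "wedge K v a b =
     sc_join (edge_simplex a b) (sc_link K v) \<union> sc_join (edge_boundary a b) (sc_delete K v)"

definition pos :: "('i \<Rightarrow> 'a::real_vector) \<Rightarrow> 'i set \<Rightarrow> 'a set" where
  "pos X J = {(\<Sum>j\<in>J. c j *\<^sub>R X j) | c. \<forall>j\<in>J. 0 \<le> c j}"

definition fan_cones :: "'v set set \<Rightarrow> ('v \<Rightarrow> 'a::real_vector) \<Rightarrow> 'a set set" where
  "fan_cones L y = (\<lambda>\<sigma>. pos y \<sigma>) ` L"

definition complete_fan :: "'v set set \<Rightarrow> 'v set \<Rightarrow> ('v \<Rightarrow> 'a::euclidean_space) \<Rightarrow> bool" where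
  "complete_fan L V y \<longleftrightarrow>
     simplicial_complex L V \<and>
     (\<forall>\<sigma>\<in>L. inj_on y \<sigma> \<and> independent (y ` \<sigma>)) \<and>
     (\<forall>\<sigma>\<in>L. \<forall>\<tau>\<in>L. pos y \<sigma> \<inter> pos y \<tau> = pos y (\<sigma> \<inter> \<tau>)) \<and>
     \<Union> (fan_cones L y) = UNIV"

definition fan_like_sphere :: "'a::euclidean_space itself \<Rightarrow> 'v set set \<Rightarrow> 'v set \<Rightarrow> bool" where
  "fan_like_sphere T K V \<longleftrightarrow> simplicial_complex K V \<and> (\<exists>y :: 'v \<Rightarrow> 'a. complete_fan K V y)"

text \<open>Projected fan w.r.t. the 1-cone of vertex i: images under the quotient map
  p (a linear surjection with kernel span{y i}) of the cones containing that 1-cone.\<close>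
definition proj_cones :: "('a \<Rightarrow> 'b) \<Rightarrow> 'a::real_vector set set \<Rightarrow> 'a set \<Rightarrow> 'b set set" where
  "proj_cones p Cs \<rho> = {p ` C | C. C \<in> Cs \<and> \<rho> \<subseteq> C}"

definition quotient_map_by :: "('a::real_vector \<Rightarrow> 'b::real_vector) \<Rightarrow> 'a \<Rightarrow> bool" where
  "quotient_map_by p v \<longleftrightarrow> linear p \<and> surj p \<and> {w. p w = 0} = span {v}"

text \<open>Space of linear dependencies of X (indexed by I), coefficients read on I.\<close>
definition dependencies :: "('i \<Rightarrow> 'a::real_vector) \<Rightarrow> 'i set \<Rightarrow> ('i \<Rightarrow> real) set" where
  "dependencies X I = {\<alpha>. (\<Sum>i\<in>I. \<alpha> i *\<^sub>R X i) = 0}"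

text \<open>Xb is a linear transform of X: there is a basis (b r), r ranging over the standard
  basis of 'c, of the dependency space, written as the rows of a matrix, and Xb i is the
  i-th column of that matrix.\<close>
definition linear_transform ::
  "('i \<Rightarrow> 'a::euclidean_space) \<Rightarrow> 'i set \<Rightarrow> ('i \<Rightarrow> 'c::euclidean_space) \<Rightarrow> bool" where
  "linear_transform X I Xb \<longleftrightarrow> finite I \<and> span (X ` I) = UNIV \<and>
     (\<exists>b :: 'c \<Rightarrow> 'i \<Rightarrow> real.
        (\<forall>r\<in>Basis. b r \<in> dependencies X I) \<and>
        (\<forall>c :: 'c \<Rightarrow> real. (\<forall>i\<in>I. (\<Sum>r\<in>Basis. c r * b r i) = 0) \<longrightarrow> (\<forall>r\<in>Basis. c r = 0)) \<and>
        (\<forall>\<alpha>\<in>dependencies X I. \<exists>c :: 'c \<Rightarrow> real. \<forall>i\<in>I. \<alpha> i = (\<Sum>r\<in>Basis. c r * b r i)) \<and>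
        (\<forall>i\<in>I. Xb i = (\<Sum>r\<in>Basis. b r i *\<^sub>R r)))"

text \<open>Xh is a Shephard diagram of X: X positively spans, and for some linear transform Xb
  of X there is an affine hyperplane H = {z. u . z = d} not through 0 meeting each open
  ray through Xb i, at the point Xh i.\<close>
definition shephard_diagram ::
  "('i \<Rightarrow> 'a::euclidean_space) \<Rightarrow> 'i set \<Rightarrow> ('i \<Rightarrow> 'c::euclidean_space) \<Rightarrow> bool" where
  "shephard_diagram X I Xh \<longleftrightarrow> finite I \<and> pos X I = UNIV \<and>
     (\<exists>Xb. linear_transform X I Xb \<and>
        (\<exists>u d. u \<noteq> 0 \<and> d \<noteq> 0 \<and>
           (\<forall>i\<in>I. inner u (Xh i) = d \<and> (\<exists>a>0. Xh i = a *\<^sub>R Xb i))))"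

definition shephard_diagram_for_fan ::
  "'a::euclidean_space set set \<Rightarrow> 'i set \<Rightarrow> ('i \<Rightarrow> 'a) \<Rightarrow> ('i \<Rightarrow> 'c::euclidean_space) \<Rightarrow> bool" where
  "shephard_diagram_for_fan Cs I X Xh \<longleftrightarrow>
     \<Union> Cs = UNIV \<and> (\<forall>i\<in>I. X i \<noteq> 0 \<and> pos X {i} \<in> Cs) \<and> shephard_diagram X I Xh"

text \<open>S(Sigma, Xh): intersection of relint conv Xh|Y over all cofaces Y of the fan.\<close>
definition S_set ::
  "'a::real_vector set set \<Rightarrow> 'i set \<Rightarrow> ('i \<Rightarrow> 'a) \<Rightarrow> ('i \<Rightarrow> 'c::euclidean_space) \<Rightarrow> 'c set" where
  "S_set Cs I X Xh =
     \<Inter> {rel_interior (convex hull (Xh ` Y)) | Y. Y \<subseteq> I \<and> pos X (I - Y) \<in> Cs}"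

end

theory Submission
  imports Defs
begin

text \<open>Every vertex of the wedge is joined by an edge to each of the two new vertices 0 and 1.
  For such a vertex v the cones of proj_v \<Sigma> are exactly the images of the cones of \<Sigma> through v,
  and distinct cones through v have distinct images; so the cofaces of proj_v \<Sigma> are precisely the
  cofaces of \<Sigma> avoiding v. Dividing by the ray of v changes the dependency space of X only in the
  coefficient at v, which the other coefficients determine since x_v \<noteq> 0; hence a linear transform,
  and so a Shephard diagram, of X restricts to one of the projected configuration. Finally, if a
  coface Y of \<Sigma> contains both 0 and 1, then Y - {0} and Y - {1} are again cofaces (the wedge allows
  adding a single new vertex to a face avoiding both), and a common point of the relative interiors
  of the convex hulls over Y - {0} and over Y - {1} lies in the relative interior of the hull over Y.\<close>

section \<open>Positive hulls\<close>

lemma convex_cone_sum: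
  "convex_cone S \<Longrightarrow> (\<And>x. x \<in> B \<Longrightarrow> f x \<in> S) \<Longrightarrow> sum f B \<in> S"
  by (induct B rule: infinite_finite_induct) (auto simp: convex_cone_add convex_cone_contains_0)

lemma mem_pos_iff: "z \<in> pos X J \<longleftrightarrow> (\<exists>c. z = (\<Sum>j\<in>J. c j *\<^sub>R X j) \<and> (\<forall>j\<in>J. 0 \<le> c j))"
  unfolding pos_def by blast

lemma convex_cone_pos: "convex_cone (pos X J)"
  unfolding convex_cone_iff
proof (intro conjI ballI allI impI)
  show "0 \<in> pos X J"
    unfolding mem_pos_iff by (auto intro!: exI[of _ "\<lambda>_. 0"])
next
  fix y z assume "y \<in> pos X J" "z \<in> pos X J"
  then obtain c d where "y = (\<Sum>j\<in>J. c j *\<^sub>R X j)" "z = (\<Sum>j\<in>J. d j *\<^sub>R X j)"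
    and "\<forall>j\<in>J. 0 \<le> c j" "\<forall>j\<in>J. 0 \<le> d j"
    unfolding mem_pos_iff by blast
  then show "y + z \<in> pos X J"
    unfolding mem_pos_iff
    by (auto intro!: exI[of _ "\<lambda>j. c j + d j"] simp: scaleR_add_left sum.distrib)
next
  fix y and a :: real assume "y \<in> pos X J" "0 \<le> a"
  then obtain c where "y = (\<Sum>j\<in>J. c j *\<^sub>R X j)" "\<forall>j\<in>J. 0 \<le> c j"
    unfolding mem_pos_iff by blast
  with \<open>0 \<le> a\<close> show "a *\<^sub>R y \<in> pos X J"
    unfolding mem_pos_iff by (auto intro!: exI[of _ "\<lambda>j. a * c j"] simp: scaleR_sum_right)
qed

lemma generator_in_pos: "finite J \<Longrightarrow> j \<in> J \<Longrightarrow> X j \<in> pos X J"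
  unfolding mem_pos_iff
  by (auto intro!: exI[of _ "\<lambda>i. if i = j then 1 else 0"] simp: if_distrib[of "\<lambda>a. a *\<^sub>R _"] cong: if_cong)

lemma pos_eq_convex_cone_hull:
  assumes "finite J"
  shows "pos X J = convex_cone hull (X ` J)"
proof
  have "c j *\<^sub>R X j \<in> convex_cone hull (X ` J)" if "j \<in> J" "0 \<le> c j" for c j
    using that by (intro convex_cone_hull_mul hull_inc) auto
  then show "pos X J \<subseteq> convex_cone hull (X ` J)"
    unfolding pos_def by (auto intro!: convex_cone_sum convex_cone_convex_cone_hull)
  show "convex_cone hull (X ` J) \<subseteq> pos X J"
    using assms by (intro hull_minimal convex_cone_pos) (auto intro: generator_in_pos)
qed

lemma closed_pos: "finite J \<Longrightarrow> closed (pos (X :: 'i \<Rightarrow> 'a::euclidean_space) J)"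
  by (simp add: pos_eq_convex_cone_hull closed_convex_cone_hull)

lemma pos_mono: "J \<subseteq> J' \<Longrightarrow> finite J' \<Longrightarrow> pos X J \<subseteq> pos X J'"
  by (simp add: pos_eq_convex_cone_hull finite_subset hull_mono image_mono)

lemma pos_linear_image: "linear p \<Longrightarrow> finite J \<Longrightarrow> p ` pos X J = pos (p \<circ> X) J"
  by (simp add: pos_eq_convex_cone_hull convex_cone_hull_linear_image[symmetric] image_comp)

lemma pos_Diff_zero:
  assumes "X v = 0" "finite J"
  shows "pos X (J - {v}) = pos X J"
proof (cases "v \<in> J")
  case True
  then have "X ` J = insert 0 (X ` (J - {v}))"
    using assms(1) by auto
  then show ?thesis
    using assms(2) by (simp add: pos_eq_convex_cone_hull hull_redundant convex_cone_hull_contains_0)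
qed simp

lemma pos_subset_span: "pos X J \<subseteq> span (X ` J)"
  unfolding pos_def by (auto intro!: span_sum span_scale intro: span_base)

lemma pos_empty [simp]: "pos X {} = {0}"
  by (simp add: pos_eq_convex_cone_hull)

section \<open>Complete simplicial fans\<close>

lemma complete_fan_face_finite: "complete_fan L V X \<Longrightarrow> \<sigma> \<in> L \<Longrightarrow> finite \<sigma>"
  by (simp add: complete_fan_def simplicial_complex_def)

lemma complete_fan_face_subset: "complete_fan L V X \<Longrightarrow> \<sigma> \<in> L \<Longrightarrow> \<sigma> \<subseteq> V"
  by (simp add: complete_fan_def simplicial_complex_def)

lemma complete_fan_singleton: "complete_fan L V X \<Longrightarrow> v \<in> V \<Longrightarrow> {v} \<in> L"
  by (simp add: complete_fan_def simplicial_complex_def)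

lemma complete_fan_inter:
  "complete_fan L V X \<Longrightarrow> \<sigma> \<in> L \<Longrightarrow> \<tau> \<in> L \<Longrightarrow> pos X \<sigma> \<inter> pos X \<tau> = pos X (\<sigma> \<inter> \<tau>)"
  by (simp add: complete_fan_def)

lemma complete_fan_covers: "complete_fan L V X \<Longrightarrow> \<exists>\<sigma>\<in>L. z \<in> pos X \<sigma>"
  unfolding complete_fan_def fan_cones_def by blast

lemma complete_fan_generator_notin_span:
  assumes "complete_fan L V X" "\<sigma> \<in> L" "k \<in> \<sigma>" "J \<subseteq> \<sigma>" "k \<notin> J"
  shows "X k \<notin> span (X ` J)"
proof
  assume k: "X k \<in> span (X ` J)"
  have inj: "inj_on X \<sigma>" and indep: "independent (X ` \<sigma>)"
    using assms(1,2) by (auto simp: complete_fan_def)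
  have "X ` J \<subseteq> X ` \<sigma> - {X k}"
    using assms(3-5) inj unfolding inj_on_def by blast
  then have "X k \<in> span (X ` \<sigma> - {X k})"
    using k span_mono by blast
  then show False
    using indep assms(3) by (auto simp: dependent_def)
qed

lemma complete_fan_generator_nonzero: "complete_fan L V X \<Longrightarrow> v \<in> V \<Longrightarrow> X v \<noteq> 0"
  using complete_fan_generator_notin_span[of L V X "{v}" v "{}"] complete_fan_singleton by fastforce

lemma complete_fan_generator_in_cone:
  assumes cf: "complete_fan L V X" and "\<sigma> \<in> L" "j \<in> V" "X j \<in> pos X \<sigma>"
  shows "j \<in> \<sigma>"
proof (rule ccontr)
  assume "j \<notin> \<sigma>"
  have "X j \<in> pos X {j} \<inter> pos X \<sigma>"
    using assms(4) generator_in_pos[of "{j}" j X] by auto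
  also have "\<dots> = pos X ({j} \<inter> \<sigma>)"
    using assms(2,3) by (intro complete_fan_inter[OF cf] complete_fan_singleton[OF cf])
  also have "\<dots> = {0}"
    using \<open>j \<notin> \<sigma>\<close> by simp
  finally show False
    using complete_fan_generator_nonzero[OF cf \<open>j \<in> V\<close>] by simp
qed

lemma complete_fan_pos_eq_face:
  assumes cf: "complete_fan L V X" and J: "J \<subseteq> V" "finite J" and "\<sigma> \<in> L"
    and eq: "pos X J = pos X \<sigma>"
  shows "J = \<sigma>"
proof
  show "J \<subseteq> \<sigma>"
  proof
    fix j assume "j \<in> J"
    then have "X j \<in> pos X \<sigma>"
      using eq generator_in_pos[OF \<open>finite J\<close>] by blast
    then show "j \<in> \<sigma>"
      using complete_fan_generator_in_cone[OF cf \<open>\<sigma> \<in> L\<close>] J \<open>j \<in> J\<close> by blast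
  qed
  show "\<sigma> \<subseteq> J"
  proof
    fix k assume "k \<in> \<sigma>"
    then have "X k \<in> span (X ` J)"
      using eq generator_in_pos[of \<sigma> k X] pos_subset_span[of X J]
        complete_fan_face_finite[OF cf \<open>\<sigma> \<in> L\<close>] by auto
    then show "k \<in> J"
      using complete_fan_generator_notin_span[OF cf \<open>\<sigma> \<in> L\<close> \<open>k \<in> \<sigma>\<close> \<open>J \<subseteq> \<sigma>\<close>] by blast
  qed
qed

lemma pos_mem_fan_cones_iff:
  assumes "complete_fan L V X" "J \<subseteq> V" "finite J"
  shows "pos X J \<in> fan_cones L X \<longleftrightarrow> J \<in> L"
  using complete_fan_pos_eq_face[OF assms] by (auto simp: fan_cones_def)

lemma S_set_fan_cones:
  assumes "complete_fan L V X" "finite V"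
  shows "S_set (fan_cones L X) V X Xh =
           \<Inter> {rel_interior (convex hull (Xh ` Y)) | Y. Y \<subseteq> V \<and> V - Y \<in> L}"
  unfolding S_set_def
  by (intro arg_cong[where f=Inter] Collect_cong) (auto simp: pos_mem_fan_cones_iff[OF assms(1)] assms(2))

section \<open>Quotients by a ray\<close>

lemma quotient_map_by_kernel: "quotient_map_by p v \<Longrightarrow> p z = 0 \<longleftrightarrow> z \<in> span {v}"
  unfolding quotient_map_by_def by (metis mem_Collect_eq)

lemma quotient_map_by_vanishes: "quotient_map_by p v \<Longrightarrow> p v = 0"
  by (simp add: quotient_map_by_kernel span_base)

lemma quotient_map_by_eq_iff:
  assumes "quotient_map_by p v"
  shows "p y = p z \<longleftrightarrow> (\<exists>t. y = z + t *\<^sub>R v)"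
proof -
  have "p y = p z \<longleftrightarrow> p (y - z) = 0"
    using assms by (simp add: quotient_map_by_def linear_diff)
  also have "\<dots> \<longleftrightarrow> (\<exists>t. y - z = t *\<^sub>R v)"
    using assms by (auto simp: quotient_map_by_kernel span_singleton)
  finally show ?thesis
    by (simp add: diff_eq_eq add.commute)
qed

lemma quotient_map_by_lift_span:
  assumes "quotient_map_by p v" "p y \<in> p ` span S"
  shows "y \<in> span (insert v S)"
proof -
  obtain w where "w \<in> span S" "p y = p w"
    using assms(2) by auto
  moreover obtain t where "y = w + t *\<^sub>R v"
    using quotient_map_by_eq_iff[OF assms(1)] \<open>p y = p w\<close> by blast
  moreover have "w \<in> span (insert v S)" "t *\<^sub>R v \<in> span (insert v S)"
    using \<open>w \<in> span S\<close> span_mono[of S "insert v S"] by (auto intro: span_scale span_base)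
  ultimately show ?thesis
    by (simp add: span_add)
qed

lemma quotient_image_pos:
  assumes "quotient_map_by p (X v)" "finite \<sigma>"
  shows "p ` pos X \<sigma> = pos (p \<circ> X) (\<sigma> - {v})"
proof -
  have "(p \<circ> X) v = 0"
    using quotient_map_by_vanishes[OF assms(1)] by simp
  then show ?thesis
    using assms by (simp add: pos_linear_image quotient_map_by_def pos_Diff_zero)
qed

lemma quotient_map_by_shift_into_pos:
  assumes q: "quotient_map_by p (X v)" and "finite \<sigma>" "v \<in> \<sigma>" "p y \<in> p ` pos X \<sigma>"
  shows "\<exists>t\<ge>0. y + t *\<^sub>R X v \<in> pos X \<sigma>"
proof -
  obtain c where "c \<in> pos X \<sigma>" "p c = p y"
    using assms(4) by auto
  then obtain t where c: "c \<in> pos X \<sigma>" "c = y + t *\<^sub>R X v"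
    using quotient_map_by_eq_iff[OF q] by blast
  show ?thesis
  proof (cases "t \<ge> 0")
    case True
    then show ?thesis using c by (intro exI[of _ t]) auto
  next
    case False
    have "(- t) *\<^sub>R X v \<in> pos X \<sigma>"
      using False assms(2,3) by (intro convex_cone_scaleR[OF convex_cone_pos] generator_in_pos) auto
    then have "c + (- t) *\<^sub>R X v \<in> pos X \<sigma>"
      by (rule convex_cone_add[OF convex_cone_pos c(1)])
    then have "y \<in> pos X \<sigma>"
      by (simp add: c(2))
    then show ?thesis by (intro exI[of _ 0]) auto
  qed
qed

section \<open>Linear transforms of a quotient configuration\<close>

lemma dependencies_lincomb:
  assumes "\<forall>r\<in>R. b r \<in> dependencies X V"
  shows "(\<lambda>i. \<Sum>r\<in>R. c r * b r i) \<in> dependencies X V"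
proof -
  have "(\<Sum>i\<in>V. (\<Sum>r\<in>R. c r * b r i) *\<^sub>R X i) = (\<Sum>r\<in>R. c r *\<^sub>R (\<Sum>i\<in>V. b r i *\<^sub>R X i))"
    by (simp add: scaleR_sum_left scaleR_sum_right sum.swap[of _ V R])
  also have "\<dots> = 0"
    using assms by (simp add: dependencies_def)
  finally show ?thesis
    by (simp add: dependencies_def)
qed

lemma dependency_vanishing_off_vertex:
  assumes "\<alpha> \<in> dependencies X V" "finite V" "v \<in> V" "X v \<noteq> 0" "\<forall>i\<in>V - {v}. \<alpha> i = 0"
  shows "\<alpha> v = 0"
proof -
  have "0 = \<alpha> v *\<^sub>R X v + (\<Sum>i\<in>V - {v}. \<alpha> i *\<^sub>R X i)"
    using assms(1-3) sum.remove[of V v "\<lambda>i. \<alpha> i *\<^sub>R X i"] by (simp add: dependencies_def)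
  then show ?thesis
    using assms(4,5) by simp
qed

lemma dependencies_quotient_restrict:
  assumes q: "quotient_map_by p (X v)" and "finite V" "\<alpha> \<in> dependencies X V"
  shows "\<alpha> \<in> dependencies (p \<circ> X) (V - {v})"
proof -
  have lin: "linear p"
    using q by (simp add: quotient_map_by_def)
  have "(\<Sum>i\<in>V - {v}. \<alpha> i *\<^sub>R (p \<circ> X) i) = (\<Sum>i\<in>V. \<alpha> i *\<^sub>R (p \<circ> X) i)"
    using assms(2) quotient_map_by_vanishes[OF q] by (intro sum.mono_neutral_left) auto
  also have "\<dots> = p (\<Sum>i\<in>V. \<alpha> i *\<^sub>R X i)"
    using lin by (simp add: linear_sum linear_scale)
  also have "\<dots> = 0"
    using assms(3) lin by (simp add: dependencies_def linear_0)
  finally show ?thesis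
    by (simp add: dependencies_def)
qed

lemma dependencies_quotient_extend:
  assumes q: "quotient_map_by p (X v)" and "finite V" "v \<in> V"
    and "\<alpha> \<in> dependencies (p \<circ> X) (V - {v})"
  shows "\<exists>t. \<alpha>(v := t) \<in> dependencies X V"
proof -
  have "p (\<Sum>i\<in>V - {v}. \<alpha> i *\<^sub>R X i) = 0"
    using assms(4) q by (simp add: dependencies_def quotient_map_by_def linear_sum linear_scale)
  then obtain s where s: "(\<Sum>i\<in>V - {v}. \<alpha> i *\<^sub>R X i) = s *\<^sub>R X v"
    using quotient_map_by_kernel[OF q] by (auto simp: span_singleton)
  have "(\<Sum>i\<in>V - {v}. (\<alpha>(v := - s)) i *\<^sub>R X i) = (\<Sum>i\<in>V - {v}. \<alpha> i *\<^sub>R X i)"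
    by (intro sum.cong) auto
  then have "(\<Sum>i\<in>V. (\<alpha>(v := - s)) i *\<^sub>R X i) = 0"
    using assms(2,3) s by (simp add: sum.remove)
  then show ?thesis
    by (auto simp: dependencies_def)
qed

lemma linear_transform_quotient:
  fixes X :: "'i \<Rightarrow> 'a::euclidean_space" and p :: "'a \<Rightarrow> 'b::euclidean_space"
    and Xb :: "'i \<Rightarrow> 'c::euclidean_space"
  assumes lt: "linear_transform X V Xb" and "v \<in> V" "X v \<noteq> 0" and q: "quotient_map_by p (X v)"
    and spans: "span ((p \<circ> X) ` (V - {v})) = UNIV"
  shows "linear_transform (p \<circ> X) (V - {v}) Xb"
proof -
  have fin: "finite V"
    using lt by (simp add: linear_transform_def)
  obtain b :: "'c \<Rightarrow> 'i \<Rightarrow> real" where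
    deps: "\<forall>r\<in>Basis. b r \<in> dependencies X V" and
    indep: "\<forall>c. (\<forall>i\<in>V. (\<Sum>r\<in>Basis. c r * b r i) = 0) \<longrightarrow> (\<forall>r\<in>Basis. c r = 0)" and
    spanning: "\<forall>\<alpha>\<in>dependencies X V. \<exists>c. \<forall>i\<in>V. \<alpha> i = (\<Sum>r\<in>Basis. c r * b r i)" and
    columns: "\<forall>i\<in>V. Xb i = (\<Sum>r\<in>Basis. b r i *\<^sub>R r)"
    using lt unfolding linear_transform_def by blast
  show ?thesis
    unfolding linear_transform_def
  proof (intro conjI exI[of _ b] ballI allI impI)
    show "finite (V - {v})"
      using fin by simp
    show "span ((p \<circ> X) ` (V - {v})) = UNIV"
      by (rule spans)
    show "b r \<in> dependencies (p \<circ> X) (V - {v})" if "r \<in> Basis" for r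
      using dependencies_quotient_restrict[of p X v, OF q fin] deps that by blast
    show "Xb i = (\<Sum>r\<in>Basis. b r i *\<^sub>R r)" if "i \<in> V - {v}" for i
      using columns that by blast
  next
    fix c :: "'c \<Rightarrow> real" and r :: 'c
    assume vanish: "\<forall>i\<in>V - {v}. (\<Sum>r\<in>Basis. c r * b r i) = 0" and "r \<in> Basis"
    have "(\<lambda>i. \<Sum>r\<in>Basis. c r * b r i) v = 0"
      by (rule dependency_vanishing_off_vertex[OF dependencies_lincomb[OF deps] fin assms(2,3)])
        (use vanish in simp)
    then have "\<forall>i\<in>V. (\<Sum>r\<in>Basis. c r * b r i) = 0"
      using vanish by auto
    then show "c r = 0"
      using indep \<open>r \<in> Basis\<close> by blast
  next
    fix \<alpha> assume "\<alpha> \<in> dependencies (p \<circ> X) (V - {v})"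
    then obtain t where "\<alpha>(v := t) \<in> dependencies X V"
      using dependencies_quotient_extend[of p X v, OF q fin assms(2)] by blast
    then obtain c where c: "\<forall>i\<in>V. (\<alpha>(v := t)) i = (\<Sum>r\<in>Basis. c r * b r i)"
      using spanning by blast
    have "\<alpha> i = (\<Sum>r\<in>Basis. c r * b r i)" if "i \<in> V - {v}" for i
    proof -
      have "(\<alpha>(v := t)) i = (\<Sum>r\<in>Basis. c r * b r i)"
        using c that by blast
      then show ?thesis
        using that by simp
    qed
    then show "\<exists>c. \<forall>i\<in>V - {v}. \<alpha> i = (\<Sum>r\<in>Basis. c r * b r i)"
      by blast
  qed
qed

lemma shephard_diagram_quotient:
  fixes X :: "'i \<Rightarrow> 'a::euclidean_space" and p :: "'a \<Rightarrow> 'b::euclidean_space"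
    and Xh :: "'i \<Rightarrow> 'c::euclidean_space"
  assumes sd: "shephard_diagram X V Xh" and "v \<in> V" "X v \<noteq> 0" and q: "quotient_map_by p (X v)"
  shows "shephard_diagram (p \<circ> X) (V - {v}) Xh"
proof -
  obtain Xb :: "'i \<Rightarrow> 'c" and u d where fin: "finite V" and posV: "pos X V = UNIV"
    and lt: "linear_transform X V Xb" and ud: "u \<noteq> 0" "d \<noteq> 0"
    and hyperplane: "\<forall>i\<in>V. inner u (Xh i) = d \<and> (\<exists>a>0. Xh i = a *\<^sub>R Xb i)"
    using sd unfolding shephard_diagram_def by blast
  have "pos (p \<circ> X) (V - {v}) = p ` pos X V"
    using quotient_image_pos[of p X v, OF q fin] by simp
  also have "\<dots> = UNIV"
    using posV q by (simp add: quotient_map_by_def)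
  finally have pos_UNIV: "pos (p \<circ> X) (V - {v}) = UNIV" .
  then have "span ((p \<circ> X) ` (V - {v})) = UNIV"
    using pos_subset_span[of "p \<circ> X" "V - {v}"] by auto
  then have "linear_transform (p \<circ> X) (V - {v}) Xb"
    by (rule linear_transform_quotient[OF lt assms(2,3) q])
  then show ?thesis
    unfolding shephard_diagram_def using fin pos_UNIV ud hyperplane
    by (intro conjI exI[of _ Xb] exI[of _ u] exI[of _ d]) auto
qed

section \<open>Projected fans\<close>

locale fan_vertex_quotient =
  fixes L :: "'i set set" and V :: "'i set" and X :: "'i \<Rightarrow> 'a::euclidean_space"
    and v :: 'i and p :: "'a \<Rightarrow> 'b::euclidean_space"
  assumes fan: "complete_fan L V X" and finite_vertices: "finite V" and vertex: "v \<in> V"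
    and quotient: "quotient_map_by p (X v)"
begin

abbreviation proj_fan :: "'b set set" where
  "proj_fan \<equiv> proj_cones p (fan_cones L X) (pos X {v})"

lemma linear_quotient: "linear p"
  using quotient by (simp add: quotient_map_by_def)

lemma proj_fan_eq: "proj_fan = {pos (p \<circ> X) (\<sigma> - {v}) | \<sigma>. \<sigma> \<in> L \<and> v \<in> \<sigma>}"
proof -
  have "pos X {v} \<subseteq> pos X \<sigma> \<longleftrightarrow> v \<in> \<sigma>" if "\<sigma> \<in> L" for \<sigma>
  proof
    assume "pos X {v} \<subseteq> pos X \<sigma>"
    then show "v \<in> \<sigma>"
      using generator_in_pos[of "{v}" v X] complete_fan_generator_in_cone[OF fan that vertex] by auto
  next
    assume "v \<in> \<sigma>"
    then show "pos X {v} \<subseteq> pos X \<sigma>"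
      using complete_fan_face_finite[OF fan that] by (intro pos_mono) auto
  qed
  moreover have "p ` pos X \<sigma> = pos (p \<circ> X) (\<sigma> - {v})" if "\<sigma> \<in> L" for \<sigma>
    using quotient_image_pos[of p X v, OF quotient complete_fan_face_finite[OF fan that]] .
  ultimately show ?thesis
    unfolding proj_cones_def fan_cones_def by blast
qed

lemma proj_fan_covers: "\<Union> proj_fan = UNIV"
proof -
  \<comment> \<open>The cones avoiding v form a closed set not containing X v, so for small \<delta> > 0 the point
    X v + \<delta> z lies in a cone through v, whose image then contains p z.\<close>
  define B where "B = \<Union> {pos X \<sigma> | \<sigma>. \<sigma> \<in> L \<and> v \<notin> \<sigma>}"
  have "finite L"
    using finite_vertices complete_fan_face_subset[OF fan] by (intro finite_subset[of L "Pow V"]) auto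
  then have "closed B"
    unfolding B_def using complete_fan_face_finite[OF fan] by (auto intro!: closed_Union closed_pos)
  moreover have "X v \<notin> B"
    unfolding B_def using complete_fan_generator_in_cone[OF fan _ vertex] by blast
  ultimately have "open (- B)" "X v \<in> - B"
    by auto
  have "w \<in> \<Union> proj_fan" for w
  proof -
    obtain z where z: "p z = w"
      using quotient by (metis quotient_map_by_def surjD)
    have "((\<lambda>\<delta>. X v + \<delta> *\<^sub>R z) \<longlongrightarrow> X v) (at_right 0)"
      by (auto intro!: tendsto_eq_intros)
    then have "\<forall>\<^sub>F \<delta> in at_right 0. X v + \<delta> *\<^sub>R z \<in> - B"
      using \<open>open (- B)\<close> \<open>X v \<in> - B\<close> by (rule topological_tendstoD)
    then have "\<forall>\<^sub>F \<delta> in at_right 0. 0 < \<delta> \<and> X v + \<delta> *\<^sub>R z \<notin> B"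
      using eventually_conj[OF eventually_at_right_less] by simp
    then obtain \<delta> :: real where "0 < \<delta>" "X v + \<delta> *\<^sub>R z \<notin> B"
      using eventually_happens'[OF trivial_limit_at_right_real] by blast
    moreover obtain \<sigma> where \<sigma>: "\<sigma> \<in> L" "X v + \<delta> *\<^sub>R z \<in> pos X \<sigma>"
      using complete_fan_covers[OF fan] by blast
    ultimately have "v \<in> \<sigma>"
      unfolding B_def by blast
    have "(1 / \<delta>) *\<^sub>R (X v + \<delta> *\<^sub>R z) \<in> pos X \<sigma>"
      using \<sigma>(2) \<open>0 < \<delta>\<close> by (intro convex_cone_scaleR[OF convex_cone_pos]) auto
    moreover have "p ((1 / \<delta>) *\<^sub>R (X v + \<delta> *\<^sub>R z)) = w"
      using \<open>0 < \<delta>\<close> z quotient_map_by_vanishes[OF quotient] linear_quotient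
      by (simp add: linear_add linear_scale)
    ultimately have "w \<in> p ` pos X \<sigma>"
      by (metis image_eqI)
    then show ?thesis
      using quotient_image_pos[of p X v, OF quotient complete_fan_face_finite[OF fan \<sigma>(1)]]
        \<sigma>(1) \<open>v \<in> \<sigma>\<close> unfolding proj_fan_eq by blast
  qed
  then show ?thesis
    by blast
qed

lemma proj_fan_pos_eq_imp_superset:
  assumes "\<sigma> \<in> L" "v \<in> \<sigma>" "J \<subseteq> \<sigma> - {v}" and eq: "pos (p \<circ> X) J = pos (p \<circ> X) (\<sigma> - {v})"
  shows "\<sigma> - {v} \<subseteq> J"
proof
  fix k assume k: "k \<in> \<sigma> - {v}"
  have fin: "finite \<sigma>"
    using complete_fan_face_finite[OF fan assms(1)] .
  then have "p (X k) \<in> pos (p \<circ> X) J"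
    using eq k generator_in_pos[of "\<sigma> - {v}" k "p \<circ> X"] by auto
  also have "\<dots> = p ` pos X J"
    using linear_quotient fin assms(3) by (simp add: pos_linear_image finite_subset)
  also have "\<dots> \<subseteq> p ` span (X ` J)"
    by (intro image_mono pos_subset_span)
  finally have "X k \<in> span (X ` insert v J)"
    using quotient_map_by_lift_span[OF quotient] by simp
  then show "k \<in> J"
    using complete_fan_generator_notin_span[OF fan assms(1), of k "insert v J"] k assms(2,3) by blast
qed

end

locale fan_apex_quotient = fan_vertex_quotient +
  assumes edge: "\<And>i. i \<in> V - {v} \<Longrightarrow> {v, i} \<in> L"
begin

lemma notin_span_apex: "i \<in> V - {v} \<Longrightarrow> X i \<notin> span {X v}"
  using complete_fan_generator_notin_span[OF fan edge, of i i "{v}"] by auto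

lemma proj_generator_nonzero: "i \<in> V - {v} \<Longrightarrow> p (X i) \<noteq> 0"
  using quotient_map_by_kernel[OF quotient] notin_span_apex by blast

lemma proj_fan_pos_eq_imp_subset:
  assumes J: "J \<subseteq> V - {v}" and "\<sigma> \<in> L" "v \<in> \<sigma>"
    and eq: "pos (p \<circ> X) J = pos (p \<circ> X) (\<sigma> - {v})"
  shows "J \<subseteq> \<sigma>"
proof
  fix j assume "j \<in> J"
  have fin: "finite \<sigma>"
    using complete_fan_face_finite[OF fan \<open>\<sigma> \<in> L\<close>] .
  have "p (X j) \<in> pos (p \<circ> X) (\<sigma> - {v})"
    using eq \<open>j \<in> J\<close> J finite_vertices generator_in_pos[of J j "p \<circ> X"]
    by (auto intro: finite_subset)
  then have "p (X j) \<in> p ` pos X \<sigma>"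
    using quotient_image_pos[of p X v, OF quotient fin] by simp
  then obtain t where "t \<ge> 0" and in_\<sigma>: "X j + t *\<^sub>R X v \<in> pos X \<sigma>"
    using quotient_map_by_shift_into_pos[of p X v, OF quotient fin \<open>v \<in> \<sigma>\<close>] by blast
  have "X j + t *\<^sub>R X v \<in> pos X {v, j}"
    using \<open>t \<ge> 0\<close> by (intro convex_cone_add[OF convex_cone_pos] convex_cone_scaleR[OF convex_cone_pos]
        generator_in_pos) auto
  then have in_inter: "X j + t *\<^sub>R X v \<in> pos X ({v, j} \<inter> \<sigma>)"
    using in_\<sigma> complete_fan_inter[OF fan edge \<open>\<sigma> \<in> L\<close>] \<open>j \<in> J\<close> J by blast
  show "j \<in> \<sigma>"
  proof (rule ccontr)
    assume "j \<notin> \<sigma>"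
    then have "{v, j} \<inter> \<sigma> = {v}"
      using \<open>v \<in> \<sigma>\<close> by auto
    then have "X j + t *\<^sub>R X v \<in> span {X v}"
      using in_inter pos_subset_span[of X "{v}"] by auto
    then have "X j \<in> span {X v}"
      by (metis add_diff_cancel_right' span_base span_diff span_scale singletonI)
    then show False
      using notin_span_apex \<open>j \<in> J\<close> J by blast
  qed
qed

lemma pos_mem_proj_fan_iff:
  assumes J: "J \<subseteq> V - {v}"
  shows "pos (p \<circ> X) J \<in> proj_fan \<longleftrightarrow> insert v J \<in> L"
proof
  assume "pos (p \<circ> X) J \<in> proj_fan"
  then obtain \<sigma> where \<sigma>: "\<sigma> \<in> L" "v \<in> \<sigma>" "pos (p \<circ> X) J = pos (p \<circ> X) (\<sigma> - {v})"
    unfolding proj_fan_eq by blast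
  then have "J \<subseteq> \<sigma> - {v}"
    using proj_fan_pos_eq_imp_subset[OF J] J by blast
  then have "J = \<sigma> - {v}"
    using proj_fan_pos_eq_imp_superset[OF \<sigma>(1,2)] \<sigma>(3) by blast
  then show "insert v J \<in> L"
    using \<sigma>(1,2) by (simp add: insert_absorb)
next
  assume "insert v J \<in> L"
  moreover have "insert v J - {v} = J"
    using J by auto
  ultimately show "pos (p \<circ> X) J \<in> proj_fan"
    unfolding proj_fan_eq by force
qed

lemma shephard_diagram_for_proj_fan:
  assumes "shephard_diagram_for_fan (fan_cones L X) V X Xh"
  shows "shephard_diagram_for_fan proj_fan (V - {v}) (p \<circ> X) Xh"
  unfolding shephard_diagram_for_fan_def
proof (intro conjI ballI proj_fan_covers)
  fix i assume "i \<in> V - {v}"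
  then show "(p \<circ> X) i \<noteq> 0" "pos (p \<circ> X) {i} \<in> proj_fan"
    using proj_generator_nonzero pos_mem_proj_fan_iff[of "{i}"] edge by auto
next
  show "shephard_diagram (p \<circ> X) (V - {v}) Xh"
    using assms vertex complete_fan_generator_nonzero[OF fan vertex] quotient
    unfolding shephard_diagram_for_fan_def by (blast intro: shephard_diagram_quotient)
qed

lemma S_set_proj_fan:
  "S_set proj_fan (V - {v}) (p \<circ> X) Xh =
     \<Inter> {rel_interior (convex hull (Xh ` Y)) | Y. Y \<subseteq> V - {v} \<and> V - Y \<in> L}"
proof -
  have "pos (p \<circ> X) (V - {v} - Y) \<in> proj_fan \<longleftrightarrow> V - Y \<in> L" if "Y \<subseteq> V - {v}" for Y
  proof -
    have "insert v (V - {v} - Y) = V - Y"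
      using that vertex by auto
    then show ?thesis
      using pos_mem_proj_fan_iff[of "V - {v} - Y"] by auto
  qed
  then show ?thesis
    unfolding S_set_def by (intro arg_cong[where f=Inter] Collect_cong) auto
qed

end

section \<open>The simplicial wedge\<close>

lemma mem_wedgeE:
  assumes "\<sigma> \<in> wedge K v a b"
  obtains A \<tau> where "\<sigma> = A \<union> \<tau>" "A \<subseteq> {a, b}" "\<tau> \<in> K" "v \<notin> \<tau>"
  using assms unfolding wedge_def sc_join_def edge_simplex_def edge_boundary_def sc_link_def sc_delete_def
  by blast

lemma Un_mem_wedgeI:
  "A \<subseteq> {a, b} \<Longrightarrow> card A \<le> 1 \<Longrightarrow> \<tau> \<in> K \<Longrightarrow> v \<notin> \<tau> \<Longrightarrow> A \<union> \<tau> \<in> wedge K v a b"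
  unfolding wedge_def sc_join_def edge_boundary_def sc_delete_def by blast

lemma insert_new_vertices_mem_wedge:
  assumes "\<sigma> \<in> wedge K v a b" "a \<notin> \<sigma>" "b \<notin> \<sigma>"
  shows "insert a \<sigma> \<in> wedge K v a b \<and> insert b \<sigma> \<in> wedge K v a b"
proof -
  obtain A \<tau> where "\<sigma> = A \<union> \<tau>" "A \<subseteq> {a, b}" "\<tau> \<in> K" "v \<notin> \<tau>"
    using mem_wedgeE[OF assms(1)] .
  with assms(2,3) have "\<sigma> = \<tau>"
    by blast
  then show ?thesis
    using Un_mem_wedgeI[of "{a}" a b \<tau> K v] Un_mem_wedgeI[of "{b}" a b \<tau> K v] \<open>\<tau> \<in> K\<close> \<open>v \<notin> \<tau>\<close>
    by simp
qed

lemma empty_face_of_wedge: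
  assumes "simplicial_complex K W" "\<sigma> \<in> wedge K v a b"
  shows "{} \<in> K"
proof -
  obtain A \<tau> where "\<tau> \<in> K"
    using mem_wedgeE[OF assms(2)] .
  then show ?thesis
    using assms(1) by (simp add: simplicial_complex_def)
qed

lemma edge_from_new_vertex_mem_wedge:
  assumes K: "simplicial_complex K W" "{} \<in> K" and "v \<in> W" "c \<in> {a, b}"
    and i: "i \<in> insert a (insert b (W - {v})) - {c}"
  shows "{c, i} \<in> wedge K v a b"
proof (cases "i \<in> {a, b}")
  case True
  have "{v} \<in> K"
    using K(1) \<open>v \<in> W\<close> by (simp add: simplicial_complex_def)
  then have "{} \<in> sc_link K v"
    using K(2) by (simp add: sc_link_def)
  then have "{a, b} \<union> {} \<in> sc_join (edge_simplex a b) (sc_link K v)"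
    unfolding sc_join_def edge_simplex_def by blast
  then have "{a, b} \<in> wedge K v a b"
    unfolding wedge_def by simp
  moreover have "{c, i} = {a, b}"
    using True i \<open>c \<in> {a, b}\<close> by auto
  ultimately show ?thesis
    by simp
next
  case False
  then have "{i} \<in> K" "v \<notin> {i}"
    using K(1) i unfolding simplicial_complex_def by auto
  then show ?thesis
    using Un_mem_wedgeI[of "{c}" a b "{i}" K v] \<open>c \<in> {a, b}\<close> by (simp add: insert_commute)
qed

section \<open>Cofaces and relative interiors\<close>

lemma rel_interior_convex_hull_Un:
  fixes S T :: "'a::euclidean_space set"
  assumes "z \<in> rel_interior (convex hull S)" "z \<in> rel_interior (convex hull T)"
  shows "z \<in> rel_interior (convex hull (S \<union> T))"
proof -
  define F where "F b = (if b then convex hull S else convex hull T)" for b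
  have z: "z \<in> rel_interior (F b)" for b
    using assms by (simp add: F_def)
  then have "F b \<noteq> {}" for b
    using rel_interior_subset by blast
  then have rel_interior_eq: "rel_interior (convex hull (\<Union> (range F))) =
      {\<Sum>b\<in>UNIV. c b *\<^sub>R s b | c s. (\<forall>b\<in>UNIV. c b > 0) \<and> sum c UNIV = 1 \<and> (\<forall>b\<in>UNIV. s b \<in> rel_interior (F b))}"
    by (intro rel_interior_convex_hull_union) (auto simp: F_def)
  have "z \<in> rel_interior (convex hull (\<Union> (range F)))"
    unfolding rel_interior_eq
    by (intro CollectI exI[of _ "\<lambda>_. 1 / 2"] exI[of _ "\<lambda>_. z"] conjI)
      (use z in \<open>simp_all add: UNIV_bool flip: scaleR_add_left\<close>)
  moreover have "\<Union> (range F) = convex hull S \<union> convex hull T"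
    by (auto simp: F_def UNIV_bool)
  ultimately show ?thesis
    by (metis hull_Un_left hull_Un_right)
qed

lemma Inter_rel_interior_cofaces_split:
  fixes Xh :: "'i \<Rightarrow> 'c::euclidean_space"
  assumes "a \<in> V" "b \<in> V" "a \<noteq> b"
    and extend: "\<And>\<sigma>. \<sigma> \<in> L \<Longrightarrow> a \<notin> \<sigma> \<Longrightarrow> b \<notin> \<sigma> \<Longrightarrow> insert a \<sigma> \<in> L \<and> insert b \<sigma> \<in> L"
  defines "R Y \<equiv> rel_interior (convex hull (Xh ` Y))"
  shows "\<Inter> {R Y | Y. Y \<subseteq> V \<and> V - Y \<in> L} =
           \<Inter> {R Y | Y. Y \<subseteq> V - {a} \<and> V - Y \<in> L} \<inter> \<Inter> {R Y | Y. Y \<subseteq> V - {b} \<and> V - Y \<in> L}"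
    (is "?lhs = ?rhs")
proof
  show "?lhs \<subseteq> ?rhs"
    by (intro Int_greatest Inter_anti_mono) blast+
  show "?rhs \<subseteq> ?lhs"
  proof
    fix z assume z: "z \<in> ?rhs"
    have za: "z \<in> R Y" if "Y \<subseteq> V - {a}" "V - Y \<in> L" for Y
      using z that by blast
    have zb: "z \<in> R Y" if "Y \<subseteq> V - {b}" "V - Y \<in> L" for Y
      using z that by blast
    have "z \<in> R Y" if Y: "Y \<subseteq> V" "V - Y \<in> L" for Y
    proof (cases "a \<in> Y \<and> b \<in> Y")
      case False
      then have "Y \<subseteq> V - {a} \<or> Y \<subseteq> V - {b}"
        using Y(1) by blast
      then show ?thesis
        using za zb Y(2) by blast
    next
      case True
      have "V - (Y - {a}) = insert a (V - Y)" "V - (Y - {b}) = insert b (V - Y)"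
        using \<open>a \<in> V\<close> \<open>b \<in> V\<close> by auto
      moreover have "insert a (V - Y) \<in> L \<and> insert b (V - Y) \<in> L"
        using True by (intro extend[OF Y(2)]) auto
      ultimately have "z \<in> R (Y - {a})" "z \<in> R (Y - {b})"
        using Y(1) za[of "Y - {a}"] zb[of "Y - {b}"] by auto
      then have "z \<in> rel_interior (convex hull (Xh ` (Y - {a}) \<union> Xh ` (Y - {b})))"
        unfolding R_def by (rule rel_interior_convex_hull_Un)
      moreover have "Xh ` (Y - {a}) \<union> Xh ` (Y - {b}) = Xh ` Y"
        using \<open>a \<noteq> b\<close> by auto
      ultimately show ?thesis
        unfolding R_def by simp
    qed
    then show "z \<in> ?lhs"
      by blast
  qed
qed

theorem proposition5p9:
  fixes K :: "nat set set" and m :: nat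
    and x :: "nat \<Rightarrow> 'a::euclidean_space"
    and Xh :: "nat \<Rightarrow> 'c::euclidean_space"
    and p0 :: "'a \<Rightarrow> 'b::euclidean_space"
    and p1 :: "'a \<Rightarrow> 'd::euclidean_space"
  assumes K_fan_like: "fan_like_sphere TYPE('k::euclidean_space) K {1..m}"
    and Sigma: "complete_fan (wedge K 1 0 1) {0..m} x"
    and shephard: "shephard_diagram_for_fan (fan_cones (wedge K 1 0 1) x) {0..m} x Xh"
    and p0: "quotient_map_by p0 (x 0)"
    and p1: "quotient_map_by p1 (x 1)"
  shows "shephard_diagram_for_fan (proj_cones p0 (fan_cones (wedge K 1 0 1) x) (pos x {0}))
           {1..m} (p0 \<circ> x) Xh
       \<and> shephard_diagram_for_fan (proj_cones p1 (fan_cones (wedge K 1 0 1) x) (pos x {1}))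
           ({0..m} - {1}) (p1 \<circ> x) Xh
       \<and> S_set (fan_cones (wedge K 1 0 1) x) {0..m} x Xh =
           S_set (proj_cones p0 (fan_cones (wedge K 1 0 1) x) (pos x {0})) {1..m} (p0 \<circ> x) Xh
           \<inter> S_set (proj_cones p1 (fan_cones (wedge K 1 0 1) x) (pos x {1})) ({0..m} - {1}) (p1 \<circ> x) Xh"
proof -
  let ?L = "wedge K 1 0 1" and ?V = "{0..m} :: nat set"
  have K: "simplicial_complex K {1..m}"
    using K_fan_like by (simp add: fan_like_sphere_def)
  have "{} \<in> K"
    using empty_face_of_wedge[OF K] complete_fan_covers[OF Sigma] by blast
  then have "{1} \<in> ?L"
    using Un_mem_wedgeI[of "{1}" 0 1 "{}" K 1] by simp
  then have "1 \<le> m"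
    using complete_fan_face_subset[OF Sigma] by fastforce
  have edges: "{c, i} \<in> ?L" if "c \<in> {0, 1}" "i \<in> ?V - {c}" for c i
    using edge_from_new_vertex_mem_wedge[OF K \<open>{} \<in> K\<close>, of 1 c 0 1 i] that \<open>1 \<le> m\<close>
    by (cases "i = 0") auto
  interpret P0: fan_apex_quotient ?L ?V x 0 p0
    by unfold_locales (use Sigma p0 edges in auto)
  interpret P1: fan_apex_quotient ?L ?V x 1 p1
    by unfold_locales (use Sigma p1 edges \<open>1 \<le> m\<close> in auto)
  have "S_set (fan_cones ?L x) ?V x Xh =
          S_set P0.proj_fan (?V - {0}) (p0 \<circ> x) Xh \<inter> S_set P1.proj_fan (?V - {1}) (p1 \<circ> x) Xh"
    unfolding S_set_fan_cones[OF Sigma finite_atLeastAtMost] P0.S_set_proj_fan P1.S_set_proj_fan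
    by (rule Inter_rel_interior_cofaces_split[OF _ _ _ insert_new_vertices_mem_wedge])
      (use \<open>1 \<le> m\<close> in auto)
  moreover have "{1..m} = ?V - {0}"
    by auto
  ultimately show ?thesis
    using P0.shephard_diagram_for_proj_fan[OF shephard] P1.shephard_diagram_for_proj_fan[OF shephard]
    by simp
qed

end
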